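(* Let $C$ be an $(n,k)$-code and $0\le d\le n-k$. Then $C$ is $\operatorname{rLD-MDS}_d(1)$ if and only if $C^\perp$ is $\operatorname{rMDS}_d(2)$.
   Context: $C$ is $(\rho,L)$ average-radius list-decodable if for every $y\in\mathbb F^n$ and every $L+1$ distinct codewords $c_0,\dots,c_L$, $\frac1{L+1}\sum_i\operatorname{wt}(y-c_i)>\rho n$. $C$ is $\operatorname{rLD-MDS}_d(L)$ if this holds with $\rho=\frac{L}{L+1}\frac{n-k-d}{n}$. For a $k'\times n$ matrix $V$ and $A_1,\dots,A_\ell\subseteq[n]$, $\mathcal G_{A_1,\dots,A_\ell}[V]$ is the block matrix whose $i$-th block row has $I_{k'}$ in the first block column and $V|_{A_i}$ (columns of $V$ in $A_i$) in block column $i+1$, zeros elsewhere. An $(n,k')$-code with generator matrix $V$ is $\operatorname{rMDS}_d(\ell)$ ($0\le d\le k'$) if $\mathcal G_{A_1,\dots,A_\ell}[V]$ has full column rank whenever $\mathcal G_{A_1,\dots,A_\ell}[W]$ has full column rank, $W$ a generic $(k'-d)\times n$ matrix (independent indeterminate entries). *)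

theory Defs
  imports "Jordan_Normal_Form.Matrix" "HOL-Library.Poly_Mapping" "HOL-Library.Product_Lexorder"
    "HOL-Computational_Algebra.Fraction_Field"
begin

(* Vectors in F^n are Jordan_Normal_Form vectors of dimension n; coordinates [n] are {0..<n}. *)

definition wt :: "'a::zero vec \<Rightarrow> nat" where
  "wt y = card {i. i < dim_vec y \<and> y $ i \<noteq> 0}"

definition full_col_rank :: "'a::field mat \<Rightarrow> bool" where
  "full_col_rank A \<longleftrightarrow>
     (\<forall>v \<in> carrier_vec (dim_col A). A *\<^sub>v v = zero_vec (dim_row A) \<longrightarrow> v = zero_vec (dim_col A))"

definition is_gen_mat :: "'a::field mat \<Rightarrow> 'a vec set \<Rightarrow> nat \<Rightarrow> nat \<Rightarrow> bool" where
  "is_gen_mat G C n k \<longleftrightarrow> G \<in> carrier_mat k n \<and> full_col_rank (transpose_mat G) \<and>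
     C = {transpose_mat G *\<^sub>v x | x. x \<in> carrier_vec k}"

definition lin_code :: "'a::field vec set \<Rightarrow> nat \<Rightarrow> nat \<Rightarrow> bool" where
  "lin_code C n k \<longleftrightarrow> (\<exists>G. is_gen_mat G C n k)"

definition dual_code :: "'a::field vec set \<Rightarrow> nat \<Rightarrow> 'a vec set" where
  "dual_code C n = {x \<in> carrier_vec n. \<forall>c \<in> C. x \<bullet> c = 0}"

definition avg_radius_LD :: "'a::field vec set \<Rightarrow> nat \<Rightarrow> real \<Rightarrow> nat \<Rightarrow> bool" where
  "avg_radius_LD C n \<rho> L \<longleftrightarrow>
     (\<forall>y \<in> carrier_vec n. \<forall>c :: nat \<Rightarrow> 'a vec.
        (\<forall>i \<le> L. c i \<in> C) \<and> inj_on c {..L} \<longrightarrow>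
        (1 / (real L + 1)) * (\<Sum>i\<le>L. real (wt (y - c i))) > \<rho> * real n)"

definition rLD_MDS :: "'a::field vec set \<Rightarrow> nat \<Rightarrow> nat \<Rightarrow> nat \<Rightarrow> nat \<Rightarrow> bool" where
  "rLD_MDS C n k d L \<longleftrightarrow>
     avg_radius_LD C n ((real L / (real L + 1)) * ((real n - real k - real d) / real n)) L"

definition restrict_cols :: "'a mat \<Rightarrow> nat set \<Rightarrow> 'a mat" where
  "restrict_cols V A = mat (dim_row V) (card A) (\<lambda>(r, c). V $$ (r, sorted_list_of_set A ! c))"

(* block column offset of the (j+1)-th block column (0-based block j of the V-blocks) *)
definition blk_off :: "nat \<Rightarrow> nat set list \<Rightarrow> nat \<Rightarrow> nat" where
  "blk_off k' As j = k' + (\<Sum>m<j. card (As ! m))"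

(* The block matrix G_{A_1,...,A_l}[V]; block row i (0-based) is
   [ I_{k'} | 0 ... 0 | V|_{A_i} | 0 ... 0 ], with V|_{A_i} in block column i+1 (after I). *)
definition G_mat :: "nat set list \<Rightarrow> 'a::{zero,one} mat \<Rightarrow> 'a mat" where
  "G_mat As V = (let k' = dim_row V; l = length As in
     mat (l * k') (blk_off k' As l)
       (\<lambda>(R, c). let i = R div k'; r = R mod k' in
          if c < k' then (if r = c then 1 else 0)
          else if blk_off k' As i \<le> c \<and> c < blk_off k' As (Suc i)
               then restrict_cols V (As ! i) $$ (r, c - blk_off k' As i)
               else 0))"

(* polynomials over F in indeterminates x_(i,j), and their fraction field *)
type_synonym 'a mpoly_pm = "((nat \<times> nat) \<Rightarrow>\<^sub>0 nat) \<Rightarrow>\<^sub>0 'a"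

(* the generic m x n matrix whose entries are independent indeterminates over F,
   viewed in the field of rational functions F(x_(i,j)) *)
definition generic_mat :: "nat \<Rightarrow> nat \<Rightarrow> ('a::field) mpoly_pm fract mat" where
  "generic_mat m n = mat m n (\<lambda>(i, j).
      Fract (Poly_Mapping.single (Poly_Mapping.single (i, j) (1::nat)) (1::'a)) 1)"

definition rMDS_mat :: "'a itself \<Rightarrow> 'a::field mat \<Rightarrow> nat \<Rightarrow> nat \<Rightarrow> nat \<Rightarrow> nat \<Rightarrow> bool" where
  "rMDS_mat _ V n k' d l \<longleftrightarrow>
     (\<forall>As. length As = l \<and> (\<forall>A \<in> set As. A \<subseteq> {..<n}) \<longrightarrow>
        full_col_rank (G_mat As (generic_mat (k' - d) n :: 'a mpoly_pm fract mat)) \<longrightarrow>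
        full_col_rank (G_mat As V))"

(* an (n,k') code D is rMDS_d(l): its generator matrices are rMDS_d(l)
   (the property does not depend on the choice of generator matrix) *)
definition rMDS :: "'a::field vec set \<Rightarrow> nat \<Rightarrow> nat \<Rightarrow> nat \<Rightarrow> nat \<Rightarrow> bool" where
  "rMDS D n k' d l \<longleftrightarrow> (\<forall>V. is_gen_mat V D n k' \<longrightarrow> rMDS_mat TYPE('a) V n k' d l)"

end

theory Submission
  imports Defs Jordan_Normal_Form.Determinant
begin

(* Both sides say that every nonzero codeword of C has weight greater than m = n - k - d.
   For L = 1 and radius (n - k - d) / (2n), a word y close on average to two distinct codewords
   a, b gives, by the triangle inequality for the Hamming weight, the nonzero codeword a - b of
   weight at most m, and conversely y = c, a = c, b = 0 for a light codeword c.
   On the dual side, G_{A1,A2}[V] has full column rank iff no nontrivial relation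
   V|A1 y1 = V|A2 y2 exists. For any matrix with m rows this forces A1, A2 to be disjoint with
   |A1| + |A2| <= m, and for the generic m x n matrix every set of at most m columns is
   independent (the diagonal monomial of a maximal minor has coefficient 1). If V is a generator
   matrix of the dual code, i.e. a parity-check matrix of C, then a relation on disjoint A1, A2
   is a codeword supported on A1 \<union> A2, hence of weight at most m; conversely a nonzero
   codeword of weight at most m is a relation on A1 = its support and A2 = {}. *)

section \<open>Hamming weight and average-radius list decoding with L = 1\<close>

definition supp_vec :: "'a::zero vec \<Rightarrow> nat set" where
  "supp_vec w = {i. i < dim_vec w \<and> w $ i \<noteq> 0}"

lemma wt_eq_card_supp_vec: "wt w = card (supp_vec w)"
  unfolding wt_def supp_vec_def ..

lemma supp_vec_subset: "supp_vec w \<subseteq> {..<dim_vec w}"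
  unfolding supp_vec_def by auto

lemma wt_zero_vec[simp]: "wt (0\<^sub>v n) = 0"
  by (simp add: wt_def)

lemma wt_le_card: "supp_vec w \<subseteq> A \<Longrightarrow> finite A \<Longrightarrow> wt w \<le> card A"
  unfolding wt_eq_card_supp_vec by (rule card_mono)

lemma wt_diff_le:
  fixes a b y :: "'a::ab_group_add vec"
  assumes "a \<in> carrier_vec n" "b \<in> carrier_vec n" "y \<in> carrier_vec n"
  shows "wt (a - b) \<le> wt (y - a) + wt (y - b)"
proof -
  have "supp_vec (a - b) \<subseteq> supp_vec (y - a) \<union> supp_vec (y - b)"
    using assms by (auto simp: supp_vec_def)
  hence "wt (a - b) \<le> card (supp_vec (y - a) \<union> supp_vec (y - b))"
    by (rule wt_le_card) (simp add: supp_vec_def)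
  also have "\<dots> \<le> wt (y - a) + wt (y - b)"
    unfolding wt_eq_card_supp_vec by (rule card_Un_le)
  finally show ?thesis .
qed

lemma avg_radius_LD_1_iff:
  fixes C :: "'a::field vec set"
  shows "avg_radius_LD C n \<rho> 1 \<longleftrightarrow>
     (\<forall>y\<in>carrier_vec n. \<forall>a\<in>C. \<forall>b\<in>C. a \<noteq> b \<longrightarrow> 2 * \<rho> * n < wt (y - a) + wt (y - b))"
proof -
  have two: "{..1::nat} = {0, 1}" by auto
  have avg: "1 / (real 1 + 1) * (\<Sum>i\<le>1. f i) > \<rho> * n \<longleftrightarrow> 2 * \<rho> * n < f 0 + f 1"
    for f :: "nat \<Rightarrow> real"
    by (simp add: two field_simps)
  have pair: "(\<forall>i\<le>1. c i \<in> C) \<and> inj_on c {..1} \<longleftrightarrow> c 0 \<in> C \<and> c 1 \<in> C \<and> c 0 \<noteq> c 1"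
    for c :: "nat \<Rightarrow> 'a vec"
    unfolding two by (auto simp: le_Suc_eq)
  show ?thesis
    unfolding avg_radius_LD_def avg pair
  proof (intro ball_cong refl iffI; clarify)
    fix y a b
    assume H: "\<forall>c :: nat \<Rightarrow> 'a vec. c 0 \<in> C \<and> c 1 \<in> C \<and> c 0 \<noteq> c 1 \<longrightarrow>
      2 * \<rho> * n < real (wt (y - c 0)) + real (wt (y - c 1))"
      and "a \<in> C" "b \<in> C" "a \<noteq> b"
    then show "2 * \<rho> * n < wt (y - a) + wt (y - b)"
      using spec[OF H, of "\<lambda>i. if i = 0 then a else b"] by simp
  qed simp
qed

lemma avg_radius_LD_1_iff_wt:
  fixes C :: "'a::field vec set"
  assumes C: "C \<subseteq> carrier_vec n" and zero: "0\<^sub>v n \<in> C"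
    and diff: "\<And>a b. a \<in> C \<Longrightarrow> b \<in> C \<Longrightarrow> a - b \<in> C"
  shows "avg_radius_LD C n \<rho> 1 \<longleftrightarrow> (\<forall>c\<in>C. c \<noteq> 0\<^sub>v n \<longrightarrow> 2 * \<rho> * n < wt c)"
  unfolding avg_radius_LD_1_iff
proof safe
  fix c assume "\<forall>y\<in>carrier_vec n. \<forall>a\<in>C. \<forall>b\<in>C. a \<noteq> b \<longrightarrow> 2 * \<rho> * n < wt (y - a) + wt (y - b)"
    and "c \<in> C" "c \<noteq> 0\<^sub>v n"
  moreover have "c \<in> carrier_vec n" using C \<open>c \<in> C\<close> by auto
  ultimately have "2 * \<rho> * n < wt (c - c) + wt (c - 0\<^sub>v n)"
    using zero by blast
  then show "2 * \<rho> * n < wt c"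
    using \<open>c \<in> carrier_vec n\<close> by simp
next
  fix y a b :: "'a vec" assume H: "\<forall>c\<in>C. c \<noteq> 0\<^sub>v n \<longrightarrow> 2 * \<rho> * n < wt c"
    and y: "y \<in> carrier_vec n" and ab: "a \<in> C" "b \<in> C" "a \<noteq> b"
  have "a - b \<noteq> 0\<^sub>v n"
    using ab C by (auto simp: vec_eq_iff)
  then have "2 * \<rho> * n < wt (a - b)"
    using H diff[OF ab(1,2)] by blast
  also have "wt (a - b) \<le> wt (y - a) + wt (y - b)"
    using ab C y by (intro wt_diff_le) auto
  finally show "2 * \<rho> * n < wt (y - a) + wt (y - b)" by simp
qed
lemma rLD_MDS_1_iff_min_wt:
  fixes C :: "'a::field vec set"
  assumes C: "C \<subseteq> carrier_vec n" and "0\<^sub>v n \<in> C"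
    and "\<And>a b. a \<in> C \<Longrightarrow> b \<in> C \<Longrightarrow> a - b \<in> C" and "k + d \<le> n"
  shows "rLD_MDS C n k d 1 \<longleftrightarrow> (\<forall>c\<in>C. c \<noteq> 0\<^sub>v n \<longrightarrow> n - k - d < wt c)"
proof -
  let ?\<rho> = "real 1 / (real 1 + 1) * ((real n - real k - real d) / real n)"
  have "2 * ?\<rho> * n = real (n - k - d)" if "c \<in> C" "c \<noteq> 0\<^sub>v n" for c
  proof -
    have "n \<noteq> 0" using that C by (auto simp: vec_eq_iff)
    then show ?thesis using \<open>k + d \<le> n\<close> by (simp add: of_nat_diff)
  qed
  moreover have "rLD_MDS C n k d 1 \<longleftrightarrow> (\<forall>c\<in>C. c \<noteq> 0\<^sub>v n \<longrightarrow> 2 * ?\<rho> * n < wt c)"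
    unfolding rLD_MDS_def by (rule avg_radius_LD_1_iff_wt[OF assms(1-3)])
  ultimately show ?thesis by auto
qed

section \<open>Restricting vectors and matrices to a set of coordinates\<close>

definition restrict_vec :: "'a vec \<Rightarrow> nat set \<Rightarrow> 'a vec" where
  "restrict_vec w A = vec (card A) (\<lambda>c. w $ (sorted_list_of_set A ! c))"

definition extend_vec :: "nat \<Rightarrow> nat set \<Rightarrow> 'a::zero vec \<Rightarrow> 'a vec" where
  "extend_vec n A u =
     vec n (\<lambda>j. if j \<in> A then u $ the_inv_into {..<card A} ((!) (sorted_list_of_set A)) j else 0)"

lemma bij_betw_nth_sorted_list_of_set:
  "finite A \<Longrightarrow> bij_betw ((!) (sorted_list_of_set A)) {..<card A} A"
  by (metis bij_betw_nth distinct_sorted_list_of_set lessThan_atLeast0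
      set_sorted_list_of_set sorted_list_of_set.length_sorted_key_list_of_set)

lemma dim_restrict_cols[simp]:
  "dim_row (restrict_cols V A) = dim_row V" "dim_col (restrict_cols V A) = card A"
  unfolding restrict_cols_def by simp_all

lemma row_restrict_cols_carrier: "row (restrict_cols V A) i \<in> carrier_vec (card A)"
  by (rule carrier_vecI) simp

lemma restrict_cols_mult_vec_carrier[simp]:
  "restrict_cols V A *\<^sub>v y \<in> carrier_vec (dim_row V)"
  by (rule carrier_vecI) simp

lemma restrict_vec_carrier[simp]: "restrict_vec w A \<in> carrier_vec (card A)"
  unfolding restrict_vec_def by simp

lemma dim_extend_vec[simp]: "dim_vec (extend_vec n A u) = n"
  unfolding extend_vec_def by simp

lemma extend_vec_carrier[simp]: "extend_vec n A u \<in> carrier_vec n"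
  by (rule carrier_vecI) simp

lemma supp_extend_vec: "supp_vec (extend_vec n A u) \<subseteq> A"
  unfolding supp_vec_def extend_vec_def by (auto split: if_splits)

lemma restrict_extend_vec:
  assumes "A \<subseteq> {..<n}" "u \<in> carrier_vec (card A)"
  shows "restrict_vec (extend_vec n A u) A = u"
proof (rule eq_vecI)
  fix t assume "t < dim_vec u"
  then have t: "t < card A" using assms(2) by simp
  have fin: "finite A" using assms(1) finite_subset by blast
  note bij = bij_betw_nth_sorted_list_of_set[OF fin]
  have "sorted_list_of_set A ! t \<in> A" using bij t by (auto simp: bij_betw_def)
  moreover have
    "the_inv_into {..<card A} ((!) (sorted_list_of_set A)) (sorted_list_of_set A ! t) = t"
    using bij t by (intro the_inv_into_f_f) (auto simp: bij_betw_def)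
  ultimately show "restrict_vec (extend_vec n A u) A $ t = u $ t"
    using t assms(1) by (auto simp: restrict_vec_def extend_vec_def)
qed (use assms in \<open>simp add: restrict_vec_def\<close>)

lemma restrict_vec_eq_0:
  assumes "finite A" "\<And>j. j \<in> A \<Longrightarrow> w $ j = 0"
  shows "restrict_vec w A = 0\<^sub>v (card A)"
  using bij_betw_nth_sorted_list_of_set[OF assms(1)] assms(2)
  by (intro eq_vecI) (auto simp: restrict_vec_def bij_betw_def)

lemma vec_eq_0_if_restrict_vec_eq_0:
  assumes fin: "finite A" and w: "w \<in> carrier_vec n" and supp: "supp_vec w \<subseteq> A"
    and "restrict_vec w A = 0\<^sub>v (card A)"
  shows "w = 0\<^sub>v n"
proof (rule eq_vecI)
  fix j assume j: "j < dim_vec (0\<^sub>v n :: 'a vec)"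
  show "w $ j = 0\<^sub>v n $ j"
  proof (cases "j \<in> A")
    case True
    then obtain t where t: "t < card A" "sorted_list_of_set A ! t = j"
      using bij_betw_nth_sorted_list_of_set[OF fin] by (force simp: bij_betw_def)
    then have "w $ j = restrict_vec w A $ t" by (simp add: restrict_vec_def)
    then show ?thesis using assms(4) j t by simp
  next
    case False
    then show ?thesis using w supp j by (auto simp: supp_vec_def)
  qed
qed (use w in simp)

lemma mult_vec_restrict_vec:
  fixes V :: "'a::field mat"
  assumes V: "V \<in> carrier_mat k n" and A: "A \<subseteq> {..<n}" and w: "w \<in> carrier_vec n"
    and supp: "supp_vec w \<subseteq> A"
  shows "V *\<^sub>v w = restrict_cols V A *\<^sub>v restrict_vec w A"
proof (rule eq_vecI)
  let ?s = "sorted_list_of_set A"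
  have fin: "finite A" using A finite_subset by blast
  fix i assume "i < dim_vec (restrict_cols V A *\<^sub>v restrict_vec w A)"
  then have i: "i < k" using V by (simp add: restrict_cols_def)
  have "(V *\<^sub>v w) $ i = (\<Sum>j<n. V $$ (i, j) * w $ j)"
    using V w i by (auto simp: scalar_prod_def lessThan_atLeast0 intro!: sum.cong)
  also have "\<dots> = (\<Sum>j\<in>A. V $$ (i, j) * w $ j)"
    using A supp w by (intro sum.mono_neutral_right) (auto simp: supp_vec_def)
  also have "\<dots> = (\<Sum>t<card A. V $$ (i, ?s ! t) * w $ (?s ! t))"
    by (rule sum.reindex_bij_betw[OF bij_betw_nth_sorted_list_of_set[OF fin], symmetric])
  also have "\<dots> = (restrict_cols V A *\<^sub>v restrict_vec w A) $ i"
    using V i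
    by (auto simp: restrict_cols_def restrict_vec_def scalar_prod_def lessThan_atLeast0
        intro!: sum.cong)
  finally show "(V *\<^sub>v w) $ i = (restrict_cols V A *\<^sub>v restrict_vec w A) $ i" .
qed (use V in \<open>simp add: restrict_cols_def\<close>)

lemma mult_vec_extend_vec:
  fixes V :: "'a::field mat"
  assumes "V \<in> carrier_mat k n" "A \<subseteq> {..<n}" "u \<in> carrier_vec (card A)"
  shows "V *\<^sub>v extend_vec n A u = restrict_cols V A *\<^sub>v u"
  using mult_vec_restrict_vec[OF assms(1,2) extend_vec_carrier supp_extend_vec]
  by (simp add: restrict_extend_vec[OF assms(2,3)])

section \<open>The block matrix for two column sets\<close>

lemma full_col_rank_imp_dim_col_le:
  fixes A :: "'a::field mat"
  assumes fcr: "full_col_rank A"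
  shows "dim_col A \<le> dim_row A"
proof (rule ccontr)
  let ?nr = "dim_row A" and ?nc = "dim_col A"
  assume "\<not> ?nc \<le> ?nr"
  then have wide: "?nr < ?nc" by simp
  define M where
    "M = mat\<^sub>r ?nc ?nc (\<lambda>i. if i = ?nr then 0\<^sub>v ?nc else if i < ?nr then row A i else 0\<^sub>v ?nc)"
  have M: "M \<in> carrier_mat ?nc ?nc" unfolding M_def by simp
  have "det M = 0"
    unfolding M_def using wide by (intro det_row_0) (auto intro!: carrier_vecI)
  then obtain v where v: "v \<in> carrier_vec ?nc" "v \<noteq> 0\<^sub>v ?nc" and Mv: "M *\<^sub>v v = 0\<^sub>v ?nc"
    using det_0_iff_vec_prod_zero_field[OF M] by blast
  have "A *\<^sub>v v = 0\<^sub>v ?nr"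
  proof (rule eq_vecI)
    fix i assume "i < dim_vec (0\<^sub>v ?nr :: 'a vec)"
    then have i: "i < ?nr" by simp
    have "(A *\<^sub>v v) $ i = (M *\<^sub>v v) $ i"
      using i wide unfolding M_def by simp
    then show "(A *\<^sub>v v) $ i = 0\<^sub>v ?nr $ i" using Mv i wide by simp
  qed simp
  then show False using fcr v unfolding full_col_rank_def by simp
qed

definition cols_jointly_indep :: "'a::field mat \<Rightarrow> nat set \<Rightarrow> nat set \<Rightarrow> bool" where
  "cols_jointly_indep V A1 A2 \<longleftrightarrow>
     (\<forall>y1\<in>carrier_vec (card A1). \<forall>y2\<in>carrier_vec (card A2).
        restrict_cols V A1 *\<^sub>v y1 = restrict_cols V A2 *\<^sub>v y2 \<longrightarrow>
        y1 = 0\<^sub>v (card A1) \<and> y2 = 0\<^sub>v (card A2))"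

lemma blk_off_2:
  "blk_off k [A1, A2] 0 = k" "blk_off k [A1, A2] (Suc 0) = k + card A1"
  "blk_off k [A1, A2] (Suc (Suc 0)) = k + card A1 + card A2"
  by (simp_all add: blk_off_def numeral_2_eq_2)

lemma G_mat_2_carrier:
  "G_mat [A1, A2] V \<in> carrier_mat (2 * dim_row V) (dim_row V + card A1 + card A2)"
  by (simp add: G_mat_def Let_def blk_off_2 mult_2)

lemma row_G_mat_2:
  assumes r: "r < dim_row V"
  shows "row (G_mat [A1, A2] V) r =
      unit_vec (dim_row V) r @\<^sub>v row (restrict_cols V A1) r @\<^sub>v 0\<^sub>v (card A2)"
    and "row (G_mat [A1, A2] V) (dim_row V + r) =
      unit_vec (dim_row V) r @\<^sub>v 0\<^sub>v (card A1) @\<^sub>v row (restrict_cols V A2) r"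
proof -
  have divmod: "r div dim_row V = 0" "r mod dim_row V = r"
    "(dim_row V + r) div dim_row V = 1" "(dim_row V + r) mod dim_row V = r"
    using r by simp_all
  show "row (G_mat [A1, A2] V) r =
      unit_vec (dim_row V) r @\<^sub>v row (restrict_cols V A1) r @\<^sub>v 0\<^sub>v (card A2)"
    and "row (G_mat [A1, A2] V) (dim_row V + r) =
      unit_vec (dim_row V) r @\<^sub>v 0\<^sub>v (card A1) @\<^sub>v row (restrict_cols V A2) r"
    using r by (auto simp: G_mat_def Let_def blk_off_2 divmod intro!: eq_vecI)
qed

lemma G_mat_2_mult_append:
  fixes V :: "'a::field mat"
  assumes x: "x \<in> carrier_vec (dim_row V)"
    and y1: "y1 \<in> carrier_vec (card A1)" and y2: "y2 \<in> carrier_vec (card A2)"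
  shows "G_mat [A1, A2] V *\<^sub>v (x @\<^sub>v y1 @\<^sub>v y2) =
    (x + restrict_cols V A1 *\<^sub>v y1) @\<^sub>v (x + restrict_cols V A2 *\<^sub>v y2)"
proof (rule eq_vecI)
  let ?k = "dim_row V" and ?G = "G_mat [A1, A2] V" and ?v = "x @\<^sub>v y1 @\<^sub>v y2"
  have dot: "(a @\<^sub>v b1 @\<^sub>v b2) \<bullet> ?v = a \<bullet> x + b1 \<bullet> y1 + b2 \<bullet> y2"
    if "a \<in> carrier_vec ?k" "b1 \<in> carrier_vec (card A1)" "b2 \<in> carrier_vec (card A2)"
    for a b1 b2
    using that x y1 y2 by (simp add: scalar_prod_append[of _ ?k _ "card A1 + card A2"]
        scalar_prod_append[of _ "card A1" _ "card A2"] add.assoc)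
  fix i assume "i < dim_vec ((x + restrict_cols V A1 *\<^sub>v y1) @\<^sub>v (x + restrict_cols V A2 *\<^sub>v y2))"
  then have i: "i < ?k + ?k" using x by simp
  then have Gv: "(?G *\<^sub>v ?v) $ i = row ?G i \<bullet> ?v"
    using G_mat_2_carrier[of A1 A2 V] by simp
  show "(?G *\<^sub>v ?v) $ i =
    ((x + restrict_cols V A1 *\<^sub>v y1) @\<^sub>v (x + restrict_cols V A2 *\<^sub>v y2)) $ i"
  proof (cases "i < ?k")
    case True
    then show ?thesis
      unfolding Gv row_G_mat_2(1)[OF True] using x y1 y2
      by (simp add: dot row_restrict_cols_carrier)
  next
    case False
    then obtain r where r: "i = ?k + r" "r < ?k" using i le_Suc_ex by fastforce
    have "(?G *\<^sub>v ?v) $ i = row ?G (?k + r) \<bullet> ?v" using Gv r(1) by simp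
    then show ?thesis
      unfolding row_G_mat_2(2)[OF r(2)] using r x y1 y2
      by (simp add: dot row_restrict_cols_carrier)
  qed
qed (use G_mat_2_carrier[of A1 A2 V] in \<open>simp add: mult_2\<close>)

lemma append_vec_eq_0_iff:
  assumes "x \<in> carrier_vec m" "y \<in> carrier_vec n"
  shows "x @\<^sub>v y = 0\<^sub>v (m + n) \<longleftrightarrow> x = 0\<^sub>v m \<and> y = (0\<^sub>v n :: 'a::zero vec)"
proof -
  have "0\<^sub>v (m + n) = (0\<^sub>v m @\<^sub>v 0\<^sub>v n :: 'a vec)" by (rule eq_vecI) auto
  then show ?thesis using assms by simp
qed

lemma G_mat_2_mult_append_eq_0_iff:
  fixes V :: "'a::field mat"
  assumes x: "x \<in> carrier_vec (dim_row V)"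
    and y1: "y1 \<in> carrier_vec (card A1)" and y2: "y2 \<in> carrier_vec (card A2)"
  shows "G_mat [A1, A2] V *\<^sub>v (x @\<^sub>v y1 @\<^sub>v y2) = 0\<^sub>v (2 * dim_row V) \<longleftrightarrow>
    x + restrict_cols V A1 *\<^sub>v y1 = 0\<^sub>v (dim_row V) \<and> x + restrict_cols V A2 *\<^sub>v y2 = 0\<^sub>v (dim_row V)"
  using assms by (simp add: G_mat_2_mult_append mult_2 append_vec_eq_0_iff)

lemma full_col_rank_G_mat_2_iff:
  fixes V :: "'a::field mat"
  shows "full_col_rank (G_mat [A1, A2] V) \<longleftrightarrow> cols_jointly_indep V A1 A2"
proof -
  let ?k = "dim_row V" and ?a1 = "card A1" and ?a2 = "card A2" and ?G = "G_mat [A1, A2] V"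
  let ?V1 = "restrict_cols V A1" and ?V2 = "restrict_cols V A2"
  have dim_G: "dim_row ?G = 2 * ?k" "dim_col ?G = ?k + (?a1 + ?a2)"
    using G_mat_2_carrier[of A1 A2 V] by auto
  have append_eq_0: "x @\<^sub>v y1 @\<^sub>v y2 = 0\<^sub>v (dim_col ?G) \<longleftrightarrow>
      x = 0\<^sub>v ?k \<and> y1 = 0\<^sub>v ?a1 \<and> y2 = 0\<^sub>v ?a2"
    if "x \<in> carrier_vec ?k" "y1 \<in> carrier_vec ?a1" "y2 \<in> carrier_vec ?a2" for x y1 y2
    using that by (simp add: dim_G append_vec_eq_0_iff)
  show ?thesis
  proof
    assume fcr: "full_col_rank ?G"
    show "cols_jointly_indep V A1 A2"
      unfolding cols_jointly_indep_def
    proof (intro ballI impI)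
      fix y1 y2 assume y: "y1 \<in> carrier_vec ?a1" "y2 \<in> carrier_vec ?a2"
        and eq: "?V1 *\<^sub>v y1 = ?V2 *\<^sub>v y2"
      let ?x = "- (?V1 *\<^sub>v y1)"
      have x: "?x \<in> carrier_vec ?k" by simp
      have "?x + ?V1 *\<^sub>v y1 = 0\<^sub>v ?k" "?x + ?V2 *\<^sub>v y2 = 0\<^sub>v ?k"
        unfolding eq by simp_all
      then have "?G *\<^sub>v (?x @\<^sub>v y1 @\<^sub>v y2) = 0\<^sub>v (dim_row ?G)"
        unfolding dim_G G_mat_2_mult_append_eq_0_iff[OF x y] by simp
      then show "y1 = 0\<^sub>v ?a1 \<and> y2 = 0\<^sub>v ?a2"
        using fcr x y append_eq_0[OF x y] unfolding full_col_rank_def by (simp add: dim_G)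
    qed
  next
    assume ind: "cols_jointly_indep V A1 A2"
    show "full_col_rank ?G"
      unfolding full_col_rank_def
    proof (intro ballI impI)
      fix v assume v: "v \<in> carrier_vec (dim_col ?G)" and Gv: "?G *\<^sub>v v = 0\<^sub>v (dim_row ?G)"
      define y where "y = vec_last v (?a1 + ?a2)"
      define x y1 y2 where "x = vec_first v ?k" and "y1 = vec_first y ?a1" and "y2 = vec_last y ?a2"
      have xy: "x \<in> carrier_vec ?k" "y1 \<in> carrier_vec ?a1" "y2 \<in> carrier_vec ?a2"
        unfolding x_def y1_def y2_def by simp_all
      have v_eq: "v = x @\<^sub>v y1 @\<^sub>v y2"
        using v unfolding x_def y1_def y2_def y_def dim_G by simp
      have "x + ?V1 *\<^sub>v y1 = 0\<^sub>v ?k" "x + ?V2 *\<^sub>v y2 = 0\<^sub>v ?k"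
        using Gv G_mat_2_mult_append_eq_0_iff[OF xy] unfolding v_eq dim_G by simp_all
      then have "?V1 *\<^sub>v y1 = ?V2 *\<^sub>v y2" and x_eq: "x = - (?V1 *\<^sub>v y1)"
        using xy(1) by (auto simp: vec_eq_iff add_eq_0_iff2)
      then have "y1 = 0\<^sub>v ?a1" "y2 = 0\<^sub>v ?a2"
        using ind xy unfolding cols_jointly_indep_def by blast+
      moreover have "x = 0\<^sub>v ?k"
        using x_eq \<open>y1 = 0\<^sub>v ?a1\<close> by (simp add: vec_eq_iff row_restrict_cols_carrier)
      ultimately show "v = 0\<^sub>v (dim_col ?G)" using append_eq_0[OF xy] v_eq by simp
    qed
  qed
qed

lemma cols_jointly_indep_disjoint:
  fixes V :: "'a::field mat"
  assumes ind: "cols_jointly_indep V A1 A2"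
    and A: "A1 \<subseteq> {..<dim_col V}" "A2 \<subseteq> {..<dim_col V}"
  shows "A1 \<inter> A2 = {}"
proof (rule ccontr)
  let ?n = "dim_col V"
  assume "A1 \<inter> A2 \<noteq> {}"
  then obtain j where j: "j \<in> A1" "j \<in> A2" by blast
  let ?e = "unit_vec ?n j :: 'a vec"
  have e: "?e \<in> carrier_vec ?n" "supp_vec ?e \<subseteq> A1" "supp_vec ?e \<subseteq> A2"
    using j by (auto simp: supp_vec_def unit_vec_def split: if_splits)
  have V: "V \<in> carrier_mat (dim_row V) ?n" by simp
  have "restrict_cols V A1 *\<^sub>v restrict_vec ?e A1 = restrict_cols V A2 *\<^sub>v restrict_vec ?e A2"
    using mult_vec_restrict_vec[OF V A(1) e(1,2)] mult_vec_restrict_vec[OF V A(2) e(1,3)] by simp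
  then have "restrict_vec ?e A1 = 0\<^sub>v (card A1)"
    using ind[unfolded cols_jointly_indep_def, rule_format,
        OF restrict_vec_carrier restrict_vec_carrier]
    by blast
  moreover have "finite A1" using A(1) finite_subset by blast
  ultimately have "?e = 0\<^sub>v ?n"
    using e(1,2) vec_eq_0_if_restrict_vec_eq_0 by blast
  moreover have "j < ?n" using j A(1) by blast
  ultimately show False by (metis index_unit_vec(1) index_zero_vec(1) zero_neq_one)
qed

lemma cols_jointly_indep_empty_iff:
  "cols_jointly_indep V A {} \<longleftrightarrow>
     (\<forall>y\<in>carrier_vec (card A). restrict_cols V A *\<^sub>v y = 0\<^sub>v (dim_row V) \<longrightarrow> y = 0\<^sub>v (card A))"
proof -
  have empty: "restrict_cols V {} *\<^sub>v y = 0\<^sub>v (dim_row V)" "y = 0\<^sub>v 0"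
    if "y \<in> carrier_vec 0" for y :: "'a vec"
    using that by (auto simp: scalar_prod_def intro!: eq_vecI)
  show ?thesis
    unfolding cols_jointly_indep_def card.empty by (metis empty zero_carrier_vec)
qed

lemma kernel_vec_eq_0_if_cols_jointly_indep:
  fixes V :: "'a::field mat"
  assumes ind: "cols_jointly_indep V A {}" and V: "V \<in> carrier_mat k n" and A: "A \<subseteq> {..<n}"
    and w: "w \<in> carrier_vec n" "V *\<^sub>v w = 0\<^sub>v k" "supp_vec w \<subseteq> A"
  shows "w = 0\<^sub>v n"
proof -
  have "restrict_cols V A *\<^sub>v restrict_vec w A = 0\<^sub>v (dim_row V)"
    using mult_vec_restrict_vec[OF V A w(1,3)] w(2) V by simp
  then have "restrict_vec w A = 0\<^sub>v (card A)"
    using ind restrict_vec_carrier unfolding cols_jointly_indep_empty_iff by blast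
  moreover have "finite A" using A finite_subset by blast
  ultimately show ?thesis using vec_eq_0_if_restrict_vec_eq_0 w(1,3) by blast
qed

lemma restrict_extend_vec_disjoint:
  assumes "B \<subseteq> {..<n}" "A \<inter> B = {}"
  shows "restrict_vec (extend_vec n A u) B = 0\<^sub>v (card B)"
proof (rule restrict_vec_eq_0)
  show "finite B" using assms(1) finite_subset by blast
  fix j assume "j \<in> B"
  then have "j < n" "j \<notin> A" using assms by auto
  then show "extend_vec n A u $ j = 0" by (simp add: extend_vec_def)
qed

lemma cols_jointly_indep_if_kernel_vec_eq_0:
  fixes V :: "'a::field mat"
  assumes V: "V \<in> carrier_mat k n" and A: "A1 \<subseteq> {..<n}" "A2 \<subseteq> {..<n}" "A1 \<inter> A2 = {}"
    and ker: "\<And>w. w \<in> carrier_vec n \<Longrightarrow> V *\<^sub>v w = 0\<^sub>v k \<Longrightarrow> supp_vec w \<subseteq> A1 \<union> A2 \<Longrightarrow> w = 0\<^sub>v n"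
  shows "cols_jointly_indep V A1 A2"
  unfolding cols_jointly_indep_def
proof (intro ballI impI)
  fix y1 y2 assume y: "y1 \<in> carrier_vec (card A1)" "y2 \<in> carrier_vec (card A2)"
    and eq: "restrict_cols V A1 *\<^sub>v y1 = restrict_cols V A2 *\<^sub>v y2"
  let ?e1 = "extend_vec n A1 y1" and ?e2 = "extend_vec n A2 y2"
  have "V *\<^sub>v (?e1 - ?e2) = V *\<^sub>v ?e1 - V *\<^sub>v ?e2"
    using V by (simp add: mult_minus_distrib_mat_vec)
  also have "\<dots> = 0\<^sub>v k"
    using eq V restrict_cols_mult_vec_carrier[of V A2 y2]
    by (simp add: mult_vec_extend_vec[OF V A(1) y(1)] mult_vec_extend_vec[OF V A(2) y(2)])
  finally have "?e1 - ?e2 = 0\<^sub>v n"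
    by (intro ker) (auto simp: supp_vec_def extend_vec_def split: if_splits)
  then have e: "?e1 = ?e2" by (auto simp: vec_eq_iff)
  have "y1 = restrict_vec ?e2 A1"
    using restrict_extend_vec[OF A(1) y(1)] e by simp
  moreover have "y2 = restrict_vec ?e1 A2"
    using restrict_extend_vec[OF A(2) y(2)] e by simp
  ultimately show "y1 = 0\<^sub>v (card A1) \<and> y2 = 0\<^sub>v (card A2)"
    using A by (simp add: restrict_extend_vec_disjoint Int_commute)
qed

section \<open>Generic matrices\<close>

definition mpoly_var :: "nat \<times> nat \<Rightarrow> 'a::field mpoly_pm" where
  "mpoly_var v = Poly_Mapping.single (Poly_Mapping.single v 1) 1"

lemma generic_mat_eq: "generic_mat m n = mat m n (\<lambda>(i, j). to_fract (mpoly_var (i, j)))"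
  unfolding generic_mat_def mpoly_var_def to_fract_def ..

lemma prod_mpoly_var:
  "(\<Prod>i\<in>S. mpoly_var (i, f i)) =
     (Poly_Mapping.single (\<Sum>i\<in>S. Poly_Mapping.single (i, f i) 1) 1 :: 'a::field mpoly_pm)"
  by (induction S rule: infinite_finite_induct) (simp_all add: mpoly_var_def mult_single)

lemma lookup_sum_single:
  fixes f :: "nat \<Rightarrow> nat"
  shows "Poly_Mapping.lookup (\<Sum>i'\<in>{0..<a}. Poly_Mapping.single (i', f i') (1::nat)) (i, j) =
     (if i < a \<and> f i = j then 1 else 0)"
proof -
  have "Poly_Mapping.lookup (\<Sum>i'\<in>{0..<a}. Poly_Mapping.single (i', f i') (1::nat)) (i, j) =
      (\<Sum>i'\<in>{0..<a}. if i' = i then (if f i = j then 1 else 0) else 0)"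
    unfolding lookup_sum by (intro sum.cong) (auto simp: lookup_single when_def)
  then show ?thesis by (simp add: sum.delta)
qed

lemma lookup_signof_mult:
  "Poly_Mapping.lookup (signof p * q) k = signof p * Poly_Mapping.lookup q k"
  for q :: "'a::field mpoly_pm"
  by (cases "evenperm p") (simp_all add: sign_def)

lemma perm_eq_id_if_monomial_eq:
  fixes g :: "nat \<Rightarrow> nat"
  assumes g: "inj_on g {0..<a}" and p: "p permutes {0..<a}"
    and eq: "(\<Sum>i\<in>{0..<a}. Poly_Mapping.single (i, g (p i)) (1::nat)) =
      (\<Sum>i\<in>{0..<a}. Poly_Mapping.single (i, g i) 1)"
  shows "p = id"
proof
  fix i show "p i = id i"
  proof (cases "i < a")
    case True
    have pi: "p i < a" using p True permutes_in_image[of p "{0..<a}" i] by auto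
    have "Poly_Mapping.lookup (\<Sum>i\<in>{0..<a}. Poly_Mapping.single (i, g i) (1::nat)) (i, g (p i))
        = 1"
      unfolding eq[symmetric] lookup_sum_single using True by simp
    then have "g i = g (p i)" unfolding lookup_sum_single by (simp split: if_splits)
    then show ?thesis using g True pi by (simp add: inj_on_def)
  next
    case False
    then show ?thesis using p by (auto simp: permutes_def)
  qed
qed

lemma det_mpoly_var_mat_ne_0:
  fixes g :: "nat \<Rightarrow> nat"
  assumes g: "inj_on g {0..<a}"
  shows "det (mat a a (\<lambda>(i, j). mpoly_var (i, g j)) :: 'a::field mpoly_pm mat) \<noteq> 0"
proof -
  let ?M = "mat a a (\<lambda>(i, j). mpoly_var (i, g j)) :: 'a mpoly_pm mat"
  let ?P = "{p. p permutes {0..<a}}"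
  define e where "e p = (\<Sum>i\<in>{0..<a}. Poly_Mapping.single (i, g (p i)) (1::nat))" for p
  have "p i < a" if "p \<in> ?P" "i < a" for p i
    using that permutes_in_image[of p "{0..<a}" i] by auto
  then have det: "det ?M = (\<Sum>p\<in>?P. signof p * Poly_Mapping.single (e p) 1)"
    unfolding det_def'[of ?M a, OF mat_carrier] e_def prod_mpoly_var[symmetric]
    by (intro sum.cong refl arg_cong2[where f = "(*)"] prod.cong) auto
  have "e p = e id \<longleftrightarrow> p = id" if "p \<in> ?P" for p
    using perm_eq_id_if_monomial_eq[OF g] that unfolding e_def by auto
  then have "Poly_Mapping.lookup (det ?M) (e id) = (\<Sum>p\<in>?P. if p = id then signof p else 0)"
    unfolding det lookup_sum lookup_signof_mult
    by (intro sum.cong refl) (auto simp: lookup_single when_def)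
  also have "\<dots> = 1"
    by (simp add: sum.delta' finite_permutations permutes_id)
  finally show ?thesis by auto
qed

lemma cols_jointly_indep_generic_mat:
  assumes A: "A \<subseteq> {..<n}" and card: "card A \<le> m"
  shows "cols_jointly_indep (generic_mat m n :: 'a::field mpoly_pm fract mat) A {}"
  unfolding cols_jointly_indep_empty_iff
proof (intro ballI impI)
  let ?W = "generic_mat m n :: 'a mpoly_pm fract mat"
  let ?a = "card A" and ?s = "sorted_list_of_set A"
  let ?P = "mat ?a ?a (\<lambda>(i, j). mpoly_var (i, ?s ! j)) :: 'a mpoly_pm mat"
  let ?M = "map_mat to_fract ?P"
  fix u assume u: "u \<in> carrier_vec ?a" and Wu: "restrict_cols ?W A *\<^sub>v u = 0\<^sub>v (dim_row ?W)"
  have fin: "finite A" using A finite_subset by blast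
  have s_lt: "?s ! c < n" if "c < ?a" for c
    using bij_betw_nth_sorted_list_of_set[OF fin] that A by (auto simp: bij_betw_def)
  have rows: "row ?M i = row (restrict_cols ?W A) i" if "i < ?a" for i
    using that card s_lt by (auto simp: generic_mat_eq restrict_cols_def intro!: eq_vecI)
  have "?M *\<^sub>v u = 0\<^sub>v ?a"
  proof (rule eq_vecI)
    fix i assume "i < dim_vec (0\<^sub>v ?a :: 'a mpoly_pm fract vec)"
    then have i: "i < ?a" by simp
    then have "(?M *\<^sub>v u) $ i = (restrict_cols ?W A *\<^sub>v u) $ i"
      using card rows by (simp add: generic_mat_eq)
    also have "\<dots> = 0\<^sub>v (dim_row ?W) $ i" unfolding Wu ..
    finally show "(?M *\<^sub>v u) $ i = 0\<^sub>v ?a $ i" using i card by (simp add: generic_mat_eq)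
  qed simp
  moreover have "det ?M \<noteq> 0"
  proof -
    interpret to_fract_hom: inj_comm_ring_hom "to_fract :: 'a mpoly_pm \<Rightarrow> _"
      by unfold_locales auto
    have "inj_on ((!) ?s) {0..<?a}"
      using bij_betw_nth_sorted_list_of_set[OF fin] by (simp add: bij_betw_def lessThan_atLeast0)
    then show ?thesis using det_mpoly_var_mat_ne_0 by simp
  qed
  ultimately show "u = 0\<^sub>v ?a"
    using u det_0_iff_vec_prod_zero_field[of ?M ?a] by auto
qed

section \<open>Parity-check matrices and dual codes\<close>

definition identity_cols :: "'a::{zero,one} mat \<Rightarrow> (nat \<Rightarrow> nat) \<Rightarrow> bool" where
  "identity_cols A f \<longleftrightarrow>
     (\<forall>l<dim_row A. f l < dim_col A \<and> (\<forall>i<dim_row A. A $$ (i, f l) = (if i = l then 1 else 0)))"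

lemma identity_cols_inj:
  fixes A :: "'a::zero_neq_one mat"
  assumes "identity_cols A f"
  shows "inj_on f {..<dim_row A}"
  using assms unfolding identity_cols_def inj_on_def by (metis lessThan_iff zero_neq_one)

lemma identity_cols_mult_vec:
  fixes A :: "'a::comm_ring_1 mat"
  assumes f: "identity_cols A f" and A: "A \<in> carrier_mat k n" and d: "d \<in> carrier_vec n"
    and supp: "supp_vec d \<subseteq> f ` {..<k}" and l: "l < k"
  shows "(A *\<^sub>v d) $ l = d $ f l"
proof -
  have fl: "f l < n" using f A l unfolding identity_cols_def by auto
  have "A $$ (l, j) * d $ j = (if j = f l then d $ j else 0)" if j: "j < n" for j
  proof (cases "d $ j = 0")
    case False
    then obtain l' where l': "l' < k" "j = f l'" using supp j d by (auto simp: supp_vec_def)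
    have "f l = f l' \<longleftrightarrow> l = l'"
      using identity_cols_inj[OF f] A l l'(1) by (auto simp: inj_on_def)
    then show ?thesis using f A l l' unfolding identity_cols_def by auto
  qed auto
  then have "(A *\<^sub>v d) $ l = (\<Sum>j<n. if j = f l then d $ j else 0)"
    using A d l by (auto simp: scalar_prod_def lessThan_atLeast0 intro!: sum.cong)
  then show ?thesis using fl by simp
qed

lemma identity_cols_transpose_mult_vec:
  fixes A :: "'a::comm_ring_1 mat"
  assumes f: "identity_cols A f" and A: "A \<in> carrier_mat k n" and x: "x \<in> carrier_vec k"
    and l: "l < k"
  shows "(transpose_mat A *\<^sub>v x) $ f l = x $ l"
proof -
  have fl: "f l < n" using f A l unfolding identity_cols_def by auto
  have "(transpose_mat A *\<^sub>v x) $ f l = (\<Sum>i = 0..<k. A $$ (i, f l) * x $ i)"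
    using A x fl by (simp add: scalar_prod_def)
  also have "\<dots> = (\<Sum>i = 0..<k. if i = l then x $ i else 0)"
    using f A l unfolding identity_cols_def by (intro sum.cong) auto
  finally show ?thesis using l by simp
qed

lemma identity_cols_full_col_rank_transpose:
  fixes A :: "'a::field mat"
  assumes f: "identity_cols A f" and A: "A \<in> carrier_mat k n"
  shows "full_col_rank (transpose_mat A)"
  unfolding full_col_rank_def
proof (intro ballI impI)
  fix x assume x: "x \<in> carrier_vec (dim_col (transpose_mat A))"
    and Ax: "transpose_mat A *\<^sub>v x = 0\<^sub>v (dim_row (transpose_mat A))"
  show "x = 0\<^sub>v (dim_col (transpose_mat A))"
  proof (rule eq_vecI)
    fix l assume "l < dim_vec (0\<^sub>v (dim_col (transpose_mat A)) :: 'a vec)"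
    then have l: "l < k" using A by simp
    have "f l < n" using f A l unfolding identity_cols_def by auto
    then show "x $ l = 0\<^sub>v (dim_col (transpose_mat A)) $ l"
      using identity_cols_transpose_mult_vec[OF f A _ l, of x] x Ax A l by simp
  qed (use x in simp)
qed

lemma mult_vec_eq_0_if_mult_eq_0:
  fixes A B :: "'a::semiring_0 mat"
  assumes "A \<in> carrier_mat a m" "B \<in> carrier_mat m b" "A * B = 0\<^sub>m a b" "x \<in> carrier_vec b"
  shows "A *\<^sub>v (B *\<^sub>v x) = 0\<^sub>v a"
proof -
  have "A *\<^sub>v (B *\<^sub>v x) = 0\<^sub>m a b *\<^sub>v x"
    using assms by (simp flip: assoc_mult_mat_vec)
  also have "\<dots> = 0\<^sub>v a"
    using assms(4) by (intro eq_vecI) auto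
  finally show ?thesis .
qed

(* With x the entries of y in the columns g, the vector y - transpose B *v x vanishes in the
   columns g; it lies in the kernel of A and is supported in the columns f, where A acts as the
   identity, so it is zero. *)
lemma identity_cols_kernel_subset:
  fixes A B :: "'a::comm_ring_1 mat"
  assumes A: "A \<in> carrier_mat a n" "identity_cols A f"
    and B: "B \<in> carrier_mat b n" "identity_cols B g"
    and cover: "{..<n} \<subseteq> f ` {..<a} \<union> g ` {..<b}"
    and orth: "A * transpose_mat B = 0\<^sub>m a b"
    and y: "y \<in> carrier_vec n" "A *\<^sub>v y = 0\<^sub>v a"
  shows "\<exists>x\<in>carrier_vec b. y = transpose_mat B *\<^sub>v x"
proof -
  define x where "x = vec b (\<lambda>s. y $ g s)"
  define d where "d = y - transpose_mat B *\<^sub>v x"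
  have x: "x \<in> carrier_vec b" unfolding x_def by simp
  have BTx: "transpose_mat B *\<^sub>v x \<in> carrier_vec n" using B(1) x by simp
  have d: "d \<in> carrier_vec n" unfolding d_def using y(1) BTx by simp
  have d_g: "d $ g s = 0" if "s < b" for s
    using identity_cols_transpose_mult_vec[OF B(2,1) x that] that B(2) B(1) y(1)
    unfolding d_def x_def identity_cols_def by simp
  have supp: "supp_vec d \<subseteq> f ` {..<a}"
    using cover d d_g by (fastforce simp: supp_vec_def)
  have "A *\<^sub>v d = A *\<^sub>v y - A *\<^sub>v (transpose_mat B *\<^sub>v x)"
    unfolding d_def using A(1) y(1) BTx by (simp add: mult_minus_distrib_mat_vec)
  also have "\<dots> = 0\<^sub>v a"
    using y(2) mult_vec_eq_0_if_mult_eq_0[OF A(1) _ orth x] B(1) by simp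
  finally have Ad: "A *\<^sub>v d = 0\<^sub>v a" .
  have d_f: "d $ f l = 0" if "l < a" for l
    using identity_cols_mult_vec[OF A(2,1) d supp that] Ad that by simp
  have "d = 0\<^sub>v n"
    using cover d d_f d_g by (fastforce simp: vec_eq_iff)
  then have "y = transpose_mat B *\<^sub>v x"
    unfolding d_def using y(1) BTx by (auto simp: vec_eq_iff)
  then show ?thesis using x by blast
qed

(* If R has the identity matrix in the columns f and a block A in the columns g, then
   complement_mat R f g has -A^T in the columns f and the identity matrix in the columns g. *)
definition complement_mat :: "'a::comm_ring_1 mat \<Rightarrow> (nat \<Rightarrow> nat) \<Rightarrow> (nat \<Rightarrow> nat) \<Rightarrow> nat \<Rightarrow> 'a mat"
  where "complement_mat R f g m = mat m (dim_col R) (\<lambda>(t, j).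
    (if j = g t then 1 else 0) - (\<Sum>l<dim_row R. if j = f l then R $$ (l, g t) else 0))"

lemma identity_cols_complement_mat:
  assumes g: "\<And>t. t < m \<Longrightarrow> g t < dim_col R \<and> g t \<notin> f ` {..<dim_row R}"
    and inj: "inj_on g {..<m}"
  shows "identity_cols (complement_mat R f g m) g"
proof -
  have "(\<Sum>l<dim_row R. if g s = f l then c l else 0) = 0" if "s < m" for s and c :: "nat \<Rightarrow> 'a"
    using g[OF that] by (intro sum.neutral) auto
  then show ?thesis
    using g inj unfolding identity_cols_def by (auto simp: complement_mat_def inj_on_def)
qed

lemma mult_transpose_complement_mat:
  fixes R :: "'a::comm_ring_1 mat"
  assumes R: "R \<in> carrier_mat k n" and f: "identity_cols R f" and g: "\<And>t. t < m \<Longrightarrow> g t < n"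
  shows "R * transpose_mat (complement_mat R f g m) = 0\<^sub>m k m"
proof (rule eq_matI)
  let ?V = "complement_mat R f g m"
  have V: "?V \<in> carrier_mat m n" using R by (simp add: complement_mat_def)
  fix i t assume "i < dim_row (0\<^sub>m k m :: 'a mat)" "t < dim_col (0\<^sub>m k m :: 'a mat)"
  then have i: "i < k" and t: "t < m" by simp_all
  have "(R * transpose_mat ?V) $$ (i, t) = (\<Sum>j<n. R $$ (i, j) * ?V $$ (t, j))"
    using R V i t by (simp add: scalar_prod_def lessThan_atLeast0)
  also have "\<dots> = (\<Sum>j<n. if j = g t then R $$ (i, j) else 0)
      - (\<Sum>j<n. \<Sum>l<k. if j = f l then R $$ (i, j) * R $$ (l, g t) else 0)"
  proof -
    have "R $$ (i, j) * ?V $$ (t, j) = (if j = g t then R $$ (i, j) else 0)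
        - (\<Sum>l<k. if j = f l then R $$ (i, j) * R $$ (l, g t) else 0)" if "j < n" for j
      using R t that
      by (auto simp: complement_mat_def right_diff_distrib sum_distrib_left intro!: sum.cong)
    then show ?thesis by (simp add: sum_subtractf)
  qed
  also have "(\<Sum>j<n. if j = g t then R $$ (i, j) else 0) = R $$ (i, g t)"
    using g[OF t] by simp
  also have "(\<Sum>j<n. \<Sum>l<k. if j = f l then R $$ (i, j) * R $$ (l, g t) else 0)
      = (\<Sum>l<k. R $$ (i, f l) * R $$ (l, g t))"
    using f R unfolding identity_cols_def by (subst sum.swap) (auto intro!: sum.cong)
  also have "\<dots> = (\<Sum>l<k. if i = l then R $$ (l, g t) else 0)"
    using f R i unfolding identity_cols_def by (intro sum.cong) auto
  finally show "(R * transpose_mat ?V) $$ (i, t) = 0\<^sub>m k m $$ (i, t)" using i t by simp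
qed (use R in \<open>simp_all add: complement_mat_def\<close>)

lemma identity_cols_complement:
  fixes R :: "'a::comm_ring_1 mat"
  assumes R: "R \<in> carrier_mat k n" and f: "identity_cols R f"
  obtains V g where "V \<in> carrier_mat (n - k) n" "identity_cols V g"
    "{..<n} \<subseteq> f ` {..<k} \<union> g ` {..<n - k}" "R * transpose_mat V = 0\<^sub>m k (n - k)"
proof -
  let ?F = "f ` {..<k}"
  have F: "?F \<subseteq> {..<n}" using f R unfolding identity_cols_def by auto
  have "card ?F = k" using card_image[OF identity_cols_inj[OF f]] R by simp
  then have "card ({..<n} - ?F) = n - k" using F by (simp add: card_Diff_subset)
  then obtain g where g: "bij_betw g {..<n - k} ({..<n} - ?F)"
    by (metis ex_bij_betw_nat_finite finite_Diff finite_lessThan lessThan_atLeast0)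
  then have "g t < n \<and> g t \<notin> ?F" if "t < n - k" for t
    using that by (auto simp: bij_betw_def)
  moreover have "{..<n} \<subseteq> ?F \<union> g ` {..<n - k}"
    using g by (auto simp: bij_betw_def)
  ultimately show ?thesis
    using that[of "complement_mat R f g (n - k)" g] g R
      identity_cols_complement_mat[of "n - k" g R f]
      mult_transpose_complement_mat[OF R f, of "n - k" g]
    by (auto simp: bij_betw_def complement_mat_def)
qed

lemma row_mult_full_col_rank_ne_0:
  fixes G :: "'a::field mat"
  assumes G: "G \<in> carrier_mat k n" and fcr: "full_col_rank (transpose_mat G)"
    and PQ: "P \<in> carrier_mat k k" "Q \<in> carrier_mat k k" "P * Q = 1\<^sub>m k" and i: "i < k"
  shows "\<exists>j<n. (P * G) $$ (i, j) \<noteq> 0"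
proof (rule ccontr)
  assume "\<not> ?thesis"
  then have zero_row: "(P * G) $$ (i, j) = 0" if "j < n" for j using that by blast
  have "transpose_mat G *\<^sub>v row P i = 0\<^sub>v n"
  proof (rule eq_vecI)
    fix j assume "j < dim_vec (0\<^sub>v n :: 'a vec)"
    then have j: "j < n" by simp
    have "(transpose_mat G *\<^sub>v row P i) $ j = row P i \<bullet> col G j"
      using G PQ(1) i j by (simp add: comm_scalar_prod[of _ k])
    also have "\<dots> = (P * G) $$ (i, j)" using PQ(1) G i j by simp
    finally show "(transpose_mat G *\<^sub>v row P i) $ j = 0\<^sub>v n $ j" using zero_row j by simp
  qed (use G in simp)
  then have "row P i = 0\<^sub>v k" using fcr G PQ(1) unfolding full_col_rank_def by auto
  then have "(P * Q) $$ (i, i) = 0" using i PQ(1,2) by simp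
  then show False using PQ(3) i by simp
qed

lemma gauss_jordan_identity_cols:
  fixes G :: "'a::field mat"
  assumes G: "G \<in> carrier_mat k n" and fcr: "full_col_rank (transpose_mat G)"
  obtains R P Q f where "R \<in> carrier_mat k n" "identity_cols R f"
    "P \<in> carrier_mat k k" "Q \<in> carrier_mat k k" "R = P * G" "G = Q * R"
proof -
  define R where "R = gauss_jordan_single G"
  note gj = gauss_jordan_single[OF G R_def[symmetric]]
  obtain P Q where PQ: "R = P * G" "P \<in> carrier_mat k k" "Q \<in> carrier_mat k k"
    "P * Q = 1\<^sub>m k" "Q * P = 1\<^sub>m k"
    using gj(4) by blast
  have R: "R \<in> carrier_mat k n" by (rule gj(2))
  have G_eq: "G = Q * R"
    using PQ G by (simp add: assoc_mult_mat[symmetric, of Q k k P k G n])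
  obtain f where "pivot_fun R f n" using gj(3) R unfolding row_echelon_form_def by auto
  then have piv: "f i \<le> n \<and> (f i < n \<longrightarrow> R $$ (i, f i) = 1 \<and> (\<forall>i'<k. i' \<noteq> i \<longrightarrow> R $$ (i', f i) = 0))
      \<and> (\<forall>j<f i. R $$ (i, j) = 0)" if "i < k" for i
    using that R unfolding pivot_fun_def Let_def by auto
  have "f i < n" if "i < k" for i
    using piv[OF that] row_mult_full_col_rank_ne_0[OF G fcr PQ(2-4) that] PQ(1)
    by (metis le_neq_implies_less)
  then have "identity_cols R f"
    unfolding identity_cols_def using R piv by auto
  then show ?thesis using that R PQ(1-3) G_eq by blast
qed

lemma dual_code_gen_mat:
  fixes V :: "'a::field mat"
  assumes "is_gen_mat V D n k"
  shows "dual_code D n = {u \<in> carrier_vec n. V *\<^sub>v u = 0\<^sub>v k}"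
proof -
  have V: "V \<in> carrier_mat k n" and D: "D = {transpose_mat V *\<^sub>v x | x. x \<in> carrier_vec k}"
    using assms unfolding is_gen_mat_def by blast+
  have "(\<forall>c\<in>D. u \<bullet> c = 0) \<longleftrightarrow> V *\<^sub>v u = 0\<^sub>v k" if u: "u \<in> carrier_vec n" for u
  proof -
    have dot: "u \<bullet> (transpose_mat V *\<^sub>v x) = x \<bullet> (V *\<^sub>v u)" if "x \<in> carrier_vec k" for x
      using V u that by (simp add: comm_scalar_prod[of u n] transpose_vec_mult_scalar)
    have "(\<forall>x\<in>carrier_vec k. x \<bullet> (V *\<^sub>v u) = 0) \<longleftrightarrow> V *\<^sub>v u = 0\<^sub>v k"
    proof
      assume H: "\<forall>x\<in>carrier_vec k. x \<bullet> (V *\<^sub>v u) = 0"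
      show "V *\<^sub>v u = 0\<^sub>v k"
      proof (rule eq_vecI)
        fix t assume "t < dim_vec (0\<^sub>v k :: 'a vec)"
        then have "unit_vec k t \<bullet> (V *\<^sub>v u) = (V *\<^sub>v u) $ t" using V u by simp
        then show "(V *\<^sub>v u) $ t = 0\<^sub>v k $ t" using H \<open>t < _\<close> by simp
      qed (use V in simp)
    qed simp
    then show ?thesis unfolding D using dot by auto
  qed
  then show ?thesis unfolding dual_code_def by auto
qed

lemma identity_cols_kernel_eq_range:
  fixes A B :: "'a::comm_ring_1 mat"
  assumes A: "A \<in> carrier_mat a n" "identity_cols A f"
    and B: "B \<in> carrier_mat b n" "identity_cols B g"
    and cover: "{..<n} \<subseteq> f ` {..<a} \<union> g ` {..<b}"
    and orth: "A * transpose_mat B = 0\<^sub>m a b"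
  shows "{y \<in> carrier_vec n. A *\<^sub>v y = 0\<^sub>v a} = {transpose_mat B *\<^sub>v x | x. x \<in> carrier_vec b}"
proof (intro equalityI subsetI)
  fix y assume "y \<in> {y \<in> carrier_vec n. A *\<^sub>v y = 0\<^sub>v a}"
  then show "y \<in> {transpose_mat B *\<^sub>v x | x. x \<in> carrier_vec b}"
    using identity_cols_kernel_subset[OF A B cover orth] by blast
next
  fix y assume "y \<in> {transpose_mat B *\<^sub>v x | x. x \<in> carrier_vec b}"
  then obtain x where x: "x \<in> carrier_vec b" "y = transpose_mat B *\<^sub>v x" by blast
  have "A *\<^sub>v y = 0\<^sub>v a"
    unfolding x(2) using B(1) by (intro mult_vec_eq_0_if_mult_eq_0[OF A(1) _ orth x(1)]) simp
  then show "y \<in> {y \<in> carrier_vec n. A *\<^sub>v y = 0\<^sub>v a}" using B(1) x by simp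
qed

lemma row_equivalent_kernel_range:
  fixes G R :: "'a::comm_ring_1 mat"
  assumes G: "G \<in> carrier_mat k n" and R: "R \<in> carrier_mat k n"
    and PQ: "P \<in> carrier_mat k k" "Q \<in> carrier_mat k k" "R = P * G" "G = Q * R"
  shows "{y \<in> carrier_vec n. G *\<^sub>v y = 0\<^sub>v k} = {y \<in> carrier_vec n. R *\<^sub>v y = 0\<^sub>v k}"
    and "{transpose_mat G *\<^sub>v x | x. x \<in> carrier_vec k} =
      {transpose_mat R *\<^sub>v x | x. x \<in> carrier_vec k}"
proof -
  have ker: "{y \<in> carrier_vec n. A *\<^sub>v y = 0\<^sub>v k} \<subseteq> {y \<in> carrier_vec n. B *\<^sub>v y = 0\<^sub>v k}"
    if "A \<in> carrier_mat k n" "M \<in> carrier_mat k k" "B = M * A" for A B M :: "'a mat"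
  proof
    fix y assume "y \<in> {y \<in> carrier_vec n. A *\<^sub>v y = 0\<^sub>v k}"
    then have "B *\<^sub>v y = M *\<^sub>v 0\<^sub>v k" and "y \<in> carrier_vec n" using that by auto
    moreover have "M *\<^sub>v 0\<^sub>v k = 0\<^sub>v k" using that(2) by (intro eq_vecI) auto
    ultimately show "y \<in> {y \<in> carrier_vec n. B *\<^sub>v y = 0\<^sub>v k}" by simp
  qed
  have range: "{transpose_mat B *\<^sub>v x | x. x \<in> carrier_vec k} \<subseteq>
      {transpose_mat A *\<^sub>v x | x. x \<in> carrier_vec k}"
    if "A \<in> carrier_mat k n" "M \<in> carrier_mat k k" "B = M * A" for A B M :: "'a mat"
  proof
    fix y assume "y \<in> {transpose_mat B *\<^sub>v x | x. x \<in> carrier_vec k}"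
    then obtain x where x: "x \<in> carrier_vec k" "y = transpose_mat B *\<^sub>v x" by blast
    have "transpose_mat B = transpose_mat A * transpose_mat M"
      unfolding that(3) using that(2,1) by (rule transpose_mult)
    then have "y = transpose_mat A *\<^sub>v (transpose_mat M *\<^sub>v x)" using x that(1,2) by simp
    moreover have "transpose_mat M *\<^sub>v x \<in> carrier_vec k" using x(1) that(2) by simp
    ultimately show "y \<in> {transpose_mat A *\<^sub>v x | x. x \<in> carrier_vec k}" by blast
  qed
  show "{y \<in> carrier_vec n. G *\<^sub>v y = 0\<^sub>v k} = {y \<in> carrier_vec n. R *\<^sub>v y = 0\<^sub>v k}"
    using ker[OF G PQ(1,3)] ker[OF R PQ(2,4)] by (rule subset_antisym)
  show "{transpose_mat G *\<^sub>v x | x. x \<in> carrier_vec k} =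
      {transpose_mat R *\<^sub>v x | x. x \<in> carrier_vec k}"
    using range[OF R PQ(2,4)] range[OF G PQ(1,3)] by (rule subset_antisym)
qed

lemma gen_mat_dual_code:
  fixes G :: "'a::field mat"
  assumes G_gen: "is_gen_mat G C n k"
  obtains V where "is_gen_mat V (dual_code C n) n (n - k)"
    "{u \<in> carrier_vec n. V *\<^sub>v u = 0\<^sub>v (n - k)} = C"
proof -
  have G: "G \<in> carrier_mat k n" and fcr: "full_col_rank (transpose_mat G)"
    and C: "C = {transpose_mat G *\<^sub>v x | x. x \<in> carrier_vec k}"
    using G_gen unfolding is_gen_mat_def by blast+
  obtain R P Q f where R: "R \<in> carrier_mat k n" "identity_cols R f"
    and PQ: "P \<in> carrier_mat k k" "Q \<in> carrier_mat k k" "R = P * G" "G = Q * R"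
    by (rule gauss_jordan_identity_cols[OF G fcr])
  obtain V g where V: "V \<in> carrier_mat (n - k) n" "identity_cols V g"
    and cover: "{..<n} \<subseteq> f ` {..<k} \<union> g ` {..<n - k}"
    and orth: "R * transpose_mat V = 0\<^sub>m k (n - k)"
    by (rule identity_cols_complement[OF R])
  have cover': "{..<n} \<subseteq> g ` {..<n - k} \<union> f ` {..<k}" using cover by blast
  have "transpose_mat (R * transpose_mat V) = V * transpose_mat R"
    using R V by (simp add: transpose_mult[of R k n _ "n - k"])
  then have orth': "V * transpose_mat R = 0\<^sub>m (n - k) k" using orth by simp
  note row_eq = row_equivalent_kernel_range[OF G R(1) PQ]
  have "dual_code C n = {transpose_mat V *\<^sub>v x | x. x \<in> carrier_vec (n - k)}"
    unfolding dual_code_gen_mat[OF G_gen] row_eq(1)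
    by (rule identity_cols_kernel_eq_range[OF R V cover orth])
  then have "is_gen_mat V (dual_code C n) n (n - k)"
    unfolding is_gen_mat_def using V identity_cols_full_col_rank_transpose[OF V(2,1)] by blast
  moreover have "{u \<in> carrier_vec n. V *\<^sub>v u = 0\<^sub>v (n - k)} = C"
    unfolding C row_eq(2) by (rule identity_cols_kernel_eq_range[OF V R cover' orth'])
  ultimately show ?thesis using that by blast
qed

lemma lin_code_le: "lin_code (C :: 'a::field vec set) n k \<Longrightarrow> k \<le> n"
  unfolding lin_code_def is_gen_mat_def using full_col_rank_imp_dim_col_le by fastforce

lemma lin_code_dual_code:
  fixes C :: "'a::field vec set"
  assumes "lin_code C n k"
  shows "lin_code (dual_code C n) n (n - k)"
  using assms gen_mat_dual_code unfolding lin_code_def by metis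

lemma dual_dual_code:
  fixes C :: "'a::field vec set"
  assumes "lin_code C n k"
  shows "dual_code (dual_code C n) n = C"
proof -
  obtain G where "is_gen_mat G C n k" using assms unfolding lin_code_def by blast
  then obtain V where "is_gen_mat V (dual_code C n) n (n - k)"
    and "{u \<in> carrier_vec n. V *\<^sub>v u = 0\<^sub>v (n - k)} = C"
    by (rule gen_mat_dual_code)
  then show ?thesis by (simp add: dual_code_gen_mat)
qed

lemma lin_code_eq_kernel:
  fixes C :: "'a::field vec set"
  assumes "lin_code C n k" "is_gen_mat V (dual_code C n) n k'"
  shows "C = {u \<in> carrier_vec n. V *\<^sub>v u = 0\<^sub>v k'}"
  using dual_dual_code[OF assms(1)] dual_code_gen_mat[OF assms(2)] by simp

section \<open>Minimum weight of a code and the rMDS property of its dual\<close>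

lemma rMDS_2_dual_if_min_wt:
  fixes C :: "'a::field vec set"
  assumes C: "lin_code C n k" and min_wt: "\<forall>c\<in>C. c \<noteq> 0\<^sub>v n \<longrightarrow> n - k - d < wt c"
  shows "rMDS (dual_code C n) n (n - k) d 2"
  unfolding rMDS_def rMDS_mat_def
proof (intro allI impI; elim conjE)
  let ?m = "n - k - d"
  let ?W = "generic_mat ?m n :: 'a mpoly_pm fract mat"
  fix V As
  assume V: "is_gen_mat V (dual_code C n) n (n - k)" and "length As = 2"
    and As: "\<forall>A\<in>set As. A \<subseteq> {..<n}" and W: "full_col_rank (G_mat As ?W)"
  then obtain A1 A2 where As_eq: "As = [A1, A2]"
    by (metis length_0_conv length_Suc_conv numeral_2_eq_2)
  have A: "A1 \<subseteq> {..<n}" "A2 \<subseteq> {..<n}" using As As_eq by auto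
  have dim_W: "dim_row ?W = ?m" "dim_col ?W = n" by (simp_all add: generic_mat_def)
  have "A1 \<inter> A2 = {}"
    using W A cols_jointly_indep_disjoint[of ?W A1 A2]
    unfolding As_eq full_col_rank_G_mat_2_iff dim_W by blast
  moreover have "card A1 + card A2 \<le> ?m"
    using full_col_rank_imp_dim_col_le[OF W] G_mat_2_carrier[of A1 A2 ?W] unfolding As_eq dim_W
    by simp
  moreover have Vc: "V \<in> carrier_mat (n - k) n" using V unfolding is_gen_mat_def by blast
  ultimately have "cols_jointly_indep V A1 A2"
  proof (intro cols_jointly_indep_if_kernel_vec_eq_0[OF Vc A])
    fix w assume w: "w \<in> carrier_vec n" "V *\<^sub>v w = 0\<^sub>v (n - k)" "supp_vec w \<subseteq> A1 \<union> A2"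
    assume card: "card A1 + card A2 \<le> ?m"
    have "w \<in> C" using lin_code_eq_kernel[OF C V] w by simp
    moreover have "wt w \<le> ?m"
      using wt_le_card[OF w(3)] card_Un_le[of A1 A2] card A finite_subset by fastforce
    ultimately show "w = 0\<^sub>v n" using min_wt by fastforce
  qed
  then show "full_col_rank (G_mat As V)"
    unfolding As_eq full_col_rank_G_mat_2_iff .
qed

lemma min_wt_if_rMDS_2_dual:
  fixes C :: "'a::field vec set"
  assumes C: "lin_code C n k" and rMDS: "rMDS (dual_code C n) n (n - k) d 2"
  shows "\<forall>c\<in>C. c \<noteq> 0\<^sub>v n \<longrightarrow> n - k - d < wt c"
proof (intro ballI impI; rule ccontr)
  let ?m = "n - k - d"
  let ?W = "generic_mat ?m n :: 'a mpoly_pm fract mat"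
  fix c assume c: "c \<in> C" "c \<noteq> 0\<^sub>v n" and light: "\<not> ?m < wt c"
  obtain V where V: "is_gen_mat V (dual_code C n) n (n - k)"
    using lin_code_dual_code[OF C] unfolding lin_code_def by blast
  have Vc: "V \<in> carrier_mat (n - k) n" using V unfolding is_gen_mat_def by blast
  have ker: "c \<in> carrier_vec n" "V *\<^sub>v c = 0\<^sub>v (n - k)"
    using c(1) lin_code_eq_kernel[OF C V] by auto
  let ?A = "supp_vec c"
  have A: "?A \<subseteq> {..<n}" using ker(1) supp_vec_subset by fastforce
  have "card ?A \<le> ?m" using light by (simp add: wt_eq_card_supp_vec)
  then have "full_col_rank (G_mat [?A, {}] ?W)"
    unfolding full_col_rank_G_mat_2_iff by (rule cols_jointly_indep_generic_mat[OF A])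
  then have "full_col_rank (G_mat [?A, {}] V)"
    using rMDS V A unfolding rMDS_def rMDS_mat_def by (simp add: numeral_2_eq_2)
  then have "c = 0\<^sub>v n"
    unfolding full_col_rank_G_mat_2_iff
    using kernel_vec_eq_0_if_cols_jointly_indep Vc A ker by blast
  then show False using c(2) by blast
qed

theorem corollary3p10:
  fixes C :: "'a::field vec set" and n k d :: nat
  assumes "lin_code C n k"
    and "d \<le> n - k"
  shows "rLD_MDS C n k d 1 \<longleftrightarrow> rMDS (dual_code C n) n (n - k) d 2"
proof -
  obtain V where V: "is_gen_mat V (dual_code C n) n (n - k)"
    using lin_code_dual_code[OF assms(1)] unfolding lin_code_def by blast
  then have Vc: "V \<in> carrier_mat (n - k) n" unfolding is_gen_mat_def by blast
  have C: "C = {u \<in> carrier_vec n. V *\<^sub>v u = 0\<^sub>v (n - k)}"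
    by (rule lin_code_eq_kernel[OF assms(1) V])
  have "rLD_MDS C n k d 1 \<longleftrightarrow> (\<forall>c\<in>C. c \<noteq> 0\<^sub>v n \<longrightarrow> n - k - d < wt c)"
  proof (rule rLD_MDS_1_iff_min_wt)
    show "a - b \<in> C" if "a \<in> C" "b \<in> C" for a b
      using that Vc unfolding C by (simp add: mult_minus_distrib_mat_vec)
    show "k + d \<le> n" using assms lin_code_le by fastforce
  qed (use Vc in \<open>auto simp: C\<close>)
  also have "\<dots> \<longleftrightarrow> rMDS (dual_code C n) n (n - k) d 2"
    using rMDS_2_dual_if_min_wt min_wt_if_rMDS_2_dual assms(1) by blast
  finally show ?thesis .
qed

end
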